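(* Let $(\mathcal{S},d_{\mathcal{S}})$ be a metric state space and $\mathcal{A}$ an action set. Let $(F,g)$ be a Lipschitz model class with constant $K_F$ and let $\widehat T$ be its generalized transition function. Then $$K^{\mathcal{A}}_{W,W}(\widehat T):=\sup_{a\in\mathcal{A}}\sup_{\mu_1,\mu_2}\frac{W\big(\widehat T(\cdot\mid\mu_1,a),\widehat T(\cdot\mid\mu_2,a)\big)}{W(\mu_1,\mu_2)}\le K_F,$$ where the supremum is over probability distributions $\mu_1\ne\mu_2$ on $\mathcal{S}$.
   Context: A Lipschitz model class is a collection $F$ of functions $f:\mathcal{S}\to\mathcal{S}$ together with, for each $a\in\mathcal{A}$, a probability distribution $g(\cdot\mid a)$ over $F$ (independent of the state), such that $K_F:=\sup_{f\in F}\sup_{s_1\ne s_2}\frac{d_{\mathcal{S}}(f(s_1),f(s_2))}{d_{\mathcal{S}}(s_1,s_2)}<\infty$. Its induced transition is $\widehat T(s'\mid s,a)=\sum_f\mathbb{1}(f(s)=s')g(f\mid a)$ and its generalized transition on a distribution $\mu$ is $\widehat T(s'\mid\mu,a)=\int\widehat T(s'\mid s,a)\mu(s)\,ds$. $W$ is the first Wasserstein metric: $W(\mu_1,\mu_2)=\inf_j\iint j(s_1,s_2)d_{\mathcal{S}}(s_1,s_2)$ over couplings $j$ of $\mu_1,\mu_2$. *)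

theory Defs
  imports "HOL-Probability.Probability"
begin

definition prob_distr :: "'a::metric_space measure \<Rightarrow> bool" where
  "prob_distr \<mu> \<longleftrightarrow> prob_space \<mu> \<and> sets \<mu> = sets borel"

definition couplings :: "'a::metric_space measure \<Rightarrow> 'a measure \<Rightarrow> ('a \<times> 'a) measure set" where
  "couplings \<mu>1 \<mu>2 = {j. prob_space j \<and> sets j = sets borel \<and>
      distr j borel fst = \<mu>1 \<and> distr j borel snd = \<mu>2}"

definition wasserstein :: "'a::metric_space measure \<Rightarrow> 'a measure \<Rightarrow> ennreal" where
  "wasserstein \<mu>1 \<mu>2 =
     (INF j \<in> couplings \<mu>1 \<mu>2. \<integral>\<^sup>+ p. ennreal (dist (fst p) (snd p)) \<partial>j)"

definition lip_ratios :: "('a::metric_space \<Rightarrow> 'a) set \<Rightarrow> real set" where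
  "lip_ratios F = {dist (f s1) (f s2) / dist s1 s2 | f s1 s2. f \<in> F \<and> s1 \<noteq> s2}"

definition K_F :: "('a::metric_space \<Rightarrow> 'a) set \<Rightarrow> real" where
  "K_F F = Sup (lip_ratios F)"

definition lipschitz_model_class ::
    "('a::metric_space \<Rightarrow> 'a) set \<Rightarrow> ('b \<Rightarrow> ('a \<Rightarrow> 'a) pmf) \<Rightarrow> bool" where
  "lipschitz_model_class F g \<longleftrightarrow> (\<forall>a. set_pmf (g a) \<subseteq> F) \<and> bdd_above (lip_ratios F)"

text \<open>Generalized transition: T(. | mu, a) = sum_f g(f|a) * (pushforward of mu by f).\<close>
definition gen_trans ::
    "('b \<Rightarrow> ('a::metric_space \<Rightarrow> 'a) pmf) \<Rightarrow> 'a measure \<Rightarrow> 'b \<Rightarrow> 'a measure" where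
  "gen_trans g \<mu> a = bind (measure_pmf (g a)) (\<lambda>f. distr \<mu> borel f)"

end

theory Submission
  imports Defs
begin

text \<open>Let K = K_F F. Push a coupling j of \<mu>1 and \<mu>2 through the random map: draw f from
  g(\<cdot>|a) and send (s1, s2) to (f s1, f s2). The resulting mixture is a coupling of the two
  generalized transitions, and since every f is K-Lipschitz its transport cost is at most K times
  that of j; the infimum over j gives the claim. For K \<le> 0 this last step breaks down in ennreal
  (0 * \<infinity> = 0 when no coupling exists), but then every f in the support is constant and
  the two generalized transitions coincide.\<close>

definition transport_cost :: "('a::metric_space \<times> 'a) measure \<Rightarrow> ennreal" where
  "transport_cost j = (\<integral>\<^sup>+ p. ennreal (dist (fst p) (snd p)) \<partial>j)"

lemma wasserstein_eq_INF_transport_cost: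
  "wasserstein \<mu>1 \<mu>2 = (INF j \<in> couplings \<mu>1 \<mu>2. transport_cost j)"
  unfolding wasserstein_def transport_cost_def ..

lemma borel_measurable_dist_pair:
  "(\<lambda>p::'a::metric_space \<times> 'a. ennreal (dist (fst p) (snd p))) \<in> borel_measurable borel"
  by (intro measurable_compose[OF _ measurable_ennreal] borel_measurable_continuous_onI
      continuous_intros)

lemma borel_measurable_map_prod_continuous:
  assumes "continuous_on UNIV f" "continuous_on UNIV g"
  shows "map_prod f g \<in> borel_measurable borel"
proof -
  have "continuous_on UNIV (\<lambda>x. (f (fst x), g (snd x)))"
    by (intro continuous_intros continuous_on_compose2[OF assms(1)]
        continuous_on_compose2[OF assms(2)]) auto
  then show ?thesis
    by (simp add: map_prod_def case_prod_beta' borel_measurable_continuous_onI)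
qed

lemma ennreal_le_mult_INF:
  fixes c x :: ennreal
  assumes "0 < c" "c < top" "\<And>j. j \<in> A \<Longrightarrow> x \<le> c * X j"
  shows "x \<le> c * (INF j \<in> A. X j)"
proof -
  have "x / c \<le> (INF j \<in> A. X j)"
    using assms by (intro INF_greatest divide_le_posI_ennreal) auto
  then have "x / c * c \<le> (INF j \<in> A. X j) * c"
    by (rule mult_right_mono) simp
  moreover have "x / c * c = x"
    using assms(1,2) by (simp add: ennreal_divide_times)
  ultimately show ?thesis
    by (simp add: mult.commute)
qed

lemma dist_le_K_F:
  assumes "bdd_above (lip_ratios F)" "f \<in> F"
  shows "dist (f x) (f y) \<le> K_F F * dist x y"
proof (cases "x = y")
  case False
  then have "dist (f x) (f y) / dist x y \<in> lip_ratios F"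
    using assms(2) unfolding lip_ratios_def by blast
  then have "dist (f x) (f y) / dist x y \<le> K_F F"
    unfolding K_F_def using assms(1) by (rule cSup_upper)
  then show ?thesis
    using False by (simp add: divide_le_eq mult.commute)
qed simp

lemma continuous_on_K_F:
  fixes F :: "('a::metric_space \<Rightarrow> 'a) set"
  assumes "bdd_above (lip_ratios F)" "f \<in> F"
  shows "continuous_on UNIV f"
proof (rule lipschitz_on_continuous_on)
  show "(max (K_F F) 0)-lipschitz_on UNIV f"
  proof (rule lipschitz_onI)
    fix x y :: 'a
    have "K_F F * dist x y \<le> max (K_F F) 0 * dist x y"
      by (intro mult_right_mono) auto
    then show "dist (f x) (f y) \<le> max (K_F F) 0 * dist x y"
      using dist_le_K_F[OF assms, of x y] by linarith
  qed simp
qed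

lemma distr_in_space_subprob_algebra:
  assumes "subprob_space M" "space N \<noteq> {}"
  shows "distr M N f \<in> space (subprob_algebra N)"
proof -
  have "emeasure (distr M N f) (space N) \<le> 1"
    unfolding distr_def emeasure_measure_of_conv
    using subprob_space.subprob_emeasure_le_1[OF assms(1)] by auto
  then show ?thesis
    using assms(2) by (auto simp: space_subprob_algebra intro!: subprob_spaceI)
qed

lemma measurable_pmf_distr:
  assumes "subprob_space M" "space N \<noteq> {}"
  shows "(\<lambda>x. distr M N (h x)) \<in> measurable (measure_pmf p) (subprob_algebra N)"
  using assms by (simp add: Pi_iff distr_in_space_subprob_algebra)

lemma bind_pmf_distr_cong:
  assumes "subprob_space M" "subprob_space M'" "space N \<noteq> {}"
    and "\<And>x. x \<in> set_pmf p \<Longrightarrow> distr M N (h x) = distr M' N (h' x)"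
  shows "measure_pmf p \<bind> (\<lambda>x. distr M N (h x)) = measure_pmf p \<bind> (\<lambda>x. distr M' N (h' x))"
  using assms by (intro bind_cong_AE[OF refl measurable_pmf_distr measurable_pmf_distr] AE_pmfI)

lemma prob_space_bind_pmf_distr:
  assumes "prob_space M" "space N \<noteq> {}" "\<And>x. x \<in> set_pmf p \<Longrightarrow> h x \<in> measurable M N"
  shows "prob_space (measure_pmf p \<bind> (\<lambda>x. distr M N (h x)))"
proof (rule prob_space.prob_space_bind[OF prob_space_measure_pmf])
  show "AE x in measure_pmf p. prob_space (distr M N (h x))"
    using assms by (intro AE_pmfI prob_space.prob_space_distr) auto
  show "(\<lambda>x. distr M N (h x)) \<in> measurable (measure_pmf p) (subprob_algebra N)"
    using assms(1,2) by (intro measurable_pmf_distr prob_space_imp_subprob_space)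
qed

lemma distr_bind_pmf_distr:
  assumes "subprob_space M" "space N \<noteq> {}" "\<And>x. x \<in> set_pmf p \<Longrightarrow> h x \<in> measurable M N"
    and "\<pi> \<in> measurable N K" "space K \<noteq> {}"
  shows "distr (measure_pmf p \<bind> (\<lambda>x. distr M N (h x))) K \<pi>
           = measure_pmf p \<bind> (\<lambda>x. distr M K (\<pi> \<circ> h x))"
proof -
  have "distr (measure_pmf p \<bind> (\<lambda>x. distr M N (h x))) K \<pi>
          = measure_pmf p \<bind> (\<lambda>x. distr (distr M N (h x)) K \<pi>)"
    by (rule distr_bind[OF measurable_pmf_distr[OF assms(1,2)] _ assms(4)]) simp
  also have "\<dots> = measure_pmf p \<bind> (\<lambda>x. distr M K (\<pi> \<circ> h x))"
  proof (rule bind_cong_AE[OF refl])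
    have "subprob_space (distr M N (h x))" for x
      using distr_in_space_subprob_algebra[OF assms(1,2)] by (simp add: space_subprob_algebra)
    then show "(\<lambda>x. distr (distr M N (h x)) K \<pi>) \<in> measurable (measure_pmf p) (subprob_algebra K)"
      using assms(5) by (simp add: Pi_iff distr_in_space_subprob_algebra)
    show "(\<lambda>x. distr M K (\<pi> \<circ> h x)) \<in> measurable (measure_pmf p) (subprob_algebra K)"
      using assms(1,5) by (rule measurable_pmf_distr)
    show "AE x in measure_pmf p. distr (distr M N (h x)) K \<pi> = distr M K (\<pi> \<circ> h x)"
      using assms(3,4) by (intro AE_pmfI distr_distr) auto
  qed
  finally show ?thesis .
qed

lemma prob_distr_gen_trans:
  assumes "lipschitz_model_class F g" "prob_distr \<mu>"
  shows "prob_distr (gen_trans g \<mu> a)"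
proof -
  have "f \<in> borel_measurable \<mu>" if "f \<in> set_pmf (g a)" for f
  proof -
    have "f \<in> F" "bdd_above (lip_ratios F)"
      using assms(1) that unfolding lipschitz_model_class_def by auto
    then have "f \<in> borel_measurable borel"
      by (intro borel_measurable_continuous_onI continuous_on_K_F)
    then show ?thesis
      using assms(2) unfolding prob_distr_def by (simp cong: measurable_cong_sets)
  qed
  then show ?thesis
    using assms(2) unfolding prob_distr_def gen_trans_def
    by (auto intro: prob_space_bind_pmf_distr)
qed

lemma wasserstein_self:
  assumes "prob_distr \<nu>"
  shows "wasserstein \<nu> \<nu> = 0"
proof -
  have \<nu>: "prob_space \<nu>" "sets \<nu> = sets borel"
    using assms unfolding prob_distr_def by auto
  have diag: "(\<lambda>x. (x, x)) \<in> measurable \<nu> borel"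
    using \<nu>(2) by (simp cong: measurable_cong_sets)
      (intro borel_measurable_continuous_onI continuous_intros)
  define j where "j = distr \<nu> borel (\<lambda>x. (x, x))"
  have marginal: "distr j borel \<pi> = \<nu>" if "continuous_on UNIV \<pi>" "\<And>x. \<pi> (x, x) = x" for \<pi>
    unfolding j_def using diag that \<nu>(2) borel_measurable_continuous_onI[OF that(1)]
    by (subst distr_distr) (auto simp: comp_def distr_id2)
  have "prob_space j"
    unfolding j_def using diag \<nu>(1) by (intro prob_space.prob_space_distr) auto
  moreover have "distr j borel fst = \<nu>" "distr j borel snd = \<nu>"
    by (intro marginal continuous_intros; simp)+
  ultimately have "j \<in> couplings \<nu> \<nu>"
    unfolding couplings_def by (simp add: j_def)
  moreover have "transport_cost j = 0"
    unfolding transport_cost_def j_def using diag borel_measurable_dist_pair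
    by (subst nn_integral_distr) auto
  ultimately show ?thesis
    unfolding wasserstein_eq_INF_transport_cost by (metis INF_lower le_zero_eq)
qed

lemma gen_trans_eq_if_K_F_nonpos:
  assumes "lipschitz_model_class F g" "K_F F \<le> 0" "prob_space \<mu>1" "prob_space \<mu>2"
  shows "gen_trans g \<mu>1 a = gen_trans g \<mu>2 a"
proof -
  have const: "distr \<mu> borel f = return borel (f undefined)"
    if "prob_space \<mu>" "f \<in> set_pmf (g a)" for \<mu> :: "'a measure" and f
  proof -
    have "bdd_above (lip_ratios F)" "f \<in> F"
      using assms(1) that(2) unfolding lipschitz_model_class_def by auto
    then have "dist (f x) (f y) \<le> 0" for x y
      by (rule order_trans[OF dist_le_K_F mult_nonpos_nonneg[OF assms(2) zero_le_dist]])
    then have "f = (\<lambda>_. f undefined)"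
      by auto
    then show ?thesis
      using prob_space.distr_const[OF that(1), of "f undefined" borel] by simp
  qed
  show ?thesis
    unfolding gen_trans_def using assms(3,4)
    by (intro bind_pmf_distr_cong prob_space_imp_subprob_space) (simp_all add: const)
qed

lemma couplings_bind_pmf_map_prod:
  fixes p :: "('a::metric_space \<Rightarrow> 'a) pmf"
  assumes j: "j \<in> couplings \<mu>1 \<mu>2"
    and cont: "\<And>f. f \<in> set_pmf p \<Longrightarrow> continuous_on UNIV f"
  shows "measure_pmf p \<bind> (\<lambda>f. distr j borel (map_prod f f))
           \<in> couplings (measure_pmf p \<bind> (\<lambda>f. distr \<mu>1 borel f))
                       (measure_pmf p \<bind> (\<lambda>f. distr \<mu>2 borel f))"
proof -
  define J where "J = measure_pmf p \<bind> (\<lambda>f. distr j borel (map_prod f f))"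
  have j_prob: "prob_space j" and j_sets: "sets j = sets borel"
    and marg: "distr j borel fst = \<mu>1" "distr j borel snd = \<mu>2"
    using j unfolding couplings_def by auto
  have meas_j: "measurable j N = measurable borel N" for N :: "'b measure"
    using j_sets by (rule measurable_cong_sets) simp
  have map_prod_meas: "map_prod f f \<in> measurable j borel" if "f \<in> set_pmf p" for f
    unfolding meas_j using cont[OF that] by (intro borel_measurable_map_prod_continuous)
  have J_marginal: "distr J borel \<pi> = measure_pmf p \<bind> (\<lambda>f. distr \<mu> borel f)"
    if "continuous_on UNIV \<pi>" "\<And>f. \<pi> \<circ> map_prod f f = f \<circ> \<pi>" "distr j borel \<pi> = \<mu>" for \<pi> \<mu>
  proof -
    have \<pi>_meas: "\<pi> \<in> measurable j borel"
      unfolding meas_j using that(1) by (rule borel_measurable_continuous_onI)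
    have "distr J borel \<pi> = measure_pmf p \<bind> (\<lambda>f. distr j borel (\<pi> \<circ> map_prod f f))"
      unfolding J_def using j_prob map_prod_meas \<pi>_meas
      by (intro distr_bind_pmf_distr prob_space_imp_subprob_space) (auto simp: meas_j)
    also have "\<dots> = measure_pmf p \<bind> (\<lambda>f. distr \<mu> borel f)"
    proof (rule bind_pmf_distr_cong)
      show "subprob_space \<mu>"
        using that(3) j_prob \<pi>_meas by (auto intro: prob_space_imp_subprob_space prob_space.prob_space_distr)
      fix f assume "f \<in> set_pmf p"
      then have "f \<in> borel_measurable borel"
        using cont borel_measurable_continuous_onI by blast
      then have "distr j borel (f \<circ> \<pi>) = distr (distr j borel \<pi>) borel f"
        using \<pi>_meas by (intro distr_distr[symmetric]) auto
      then show "distr j borel (\<pi> \<circ> map_prod f f) = distr \<mu> borel f"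
        using that(2,3) by simp
    qed (use j_prob prob_space_imp_subprob_space in auto)
    finally show ?thesis .
  qed
  have "prob_space J"
    unfolding J_def using j_prob map_prod_meas by (intro prob_space_bind_pmf_distr) auto
  moreover have "sets J = sets borel"
    unfolding J_def by (rule sets_bind) auto
  moreover have "distr J borel fst = measure_pmf p \<bind> (\<lambda>f. distr \<mu>1 borel f)"
    by (rule J_marginal[OF _ _ marg(1)]) (simp_all add: fun_eq_iff continuous_on_fst[OF continuous_on_id])
  moreover have "distr J borel snd = measure_pmf p \<bind> (\<lambda>f. distr \<mu>2 borel f)"
    by (rule J_marginal[OF _ _ marg(2)]) (simp_all add: fun_eq_iff continuous_on_snd[OF continuous_on_id])
  ultimately show ?thesis
    unfolding couplings_def J_def by blast
qed

lemma transport_cost_bind_pmf_map_prod_le: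
  fixes p :: "('a::metric_space \<Rightarrow> 'a) pmf"
  assumes j: "subprob_space j" "sets j = sets borel"
    and cont: "\<And>f. f \<in> set_pmf p \<Longrightarrow> continuous_on UNIV f"
    and lip: "\<And>f x y. f \<in> set_pmf p \<Longrightarrow> dist (f x) (f y) \<le> K * dist x y"
  shows "transport_cost (measure_pmf p \<bind> (\<lambda>f. distr j borel (map_prod f f)))
           \<le> ennreal K * transport_cost j"
proof -
  have meas_j: "measurable j N = measurable borel N" for N :: "'b measure"
    using j(2) by (rule measurable_cong_sets) simp
  have cost_push: "transport_cost (distr j borel (map_prod f f)) \<le> ennreal K * transport_cost j"
    if "f \<in> set_pmf p" for f
  proof -
    have "transport_cost (distr j borel (map_prod f f))
            = (\<integral>\<^sup>+ q. ennreal (dist (f (fst q)) (f (snd q))) \<partial>j)"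
      unfolding transport_cost_def using cont[OF that] borel_measurable_dist_pair
      by (subst nn_integral_distr) (auto simp: meas_j borel_measurable_map_prod_continuous)
    also have "\<dots> \<le> (\<integral>\<^sup>+ q. ennreal K * ennreal (dist (fst q) (snd q)) \<partial>j)"
      using lip[OF that] by (intro nn_integral_mono) (simp add: ennreal_leI flip: ennreal_mult'')
    also have "\<dots> = ennreal K * transport_cost j"
      unfolding transport_cost_def using borel_measurable_dist_pair
      by (subst nn_integral_cmult) (auto simp: meas_j)
    finally show ?thesis .
  qed
  have "transport_cost (measure_pmf p \<bind> (\<lambda>f. distr j borel (map_prod f f)))
          = (\<integral>\<^sup>+ f. transport_cost (distr j borel (map_prod f f)) \<partial>measure_pmf p)"
    unfolding transport_cost_def
    by (rule nn_integral_bind[OF borel_measurable_dist_pair measurable_pmf_distr[OF j(1)]]) simp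
  also have "\<dots> \<le> (\<integral>\<^sup>+ f. ennreal K * transport_cost j \<partial>measure_pmf p)"
    using cost_push by (intro nn_integral_mono_AE AE_pmfI)
  also have "\<dots> = ennreal K * transport_cost j"
    by (simp add: measure_pmf.emeasure_space_1)
  finally show ?thesis .
qed

lemma wasserstein_gen_trans_le_transport_cost:
  assumes "lipschitz_model_class F g" "j \<in> couplings \<mu>1 \<mu>2"
  shows "wasserstein (gen_trans g \<mu>1 a) (gen_trans g \<mu>2 a) \<le> ennreal (K_F F) * transport_cost j"
proof -
  have cont: "continuous_on UNIV f" and lip: "dist (f x) (f y) \<le> K_F F * dist x y"
    if "f \<in> set_pmf (g a)" for f x y
    using assms(1) that continuous_on_K_F dist_le_K_F unfolding lipschitz_model_class_def by blast+
  have j_sub: "subprob_space j" and j_sets: "sets j = sets borel"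
    using assms(2) unfolding couplings_def by (auto intro: prob_space_imp_subprob_space)
  have "measure_pmf (g a) \<bind> (\<lambda>f. distr j borel (map_prod f f))
          \<in> couplings (gen_trans g \<mu>1 a) (gen_trans g \<mu>2 a)"
    unfolding gen_trans_def by (rule couplings_bind_pmf_map_prod[OF assms(2) cont])
  then have "wasserstein (gen_trans g \<mu>1 a) (gen_trans g \<mu>2 a)
               \<le> transport_cost (measure_pmf (g a) \<bind> (\<lambda>f. distr j borel (map_prod f f)))"
    unfolding wasserstein_eq_INF_transport_cost by (rule INF_lower)
  also have "\<dots> \<le> ennreal (K_F F) * transport_cost j"
    by (rule transport_cost_bind_pmf_map_prod_le[OF j_sub j_sets cont lip])
  finally show ?thesis .
qed

theorem lemma1:
  fixes F :: "('a::metric_space \<Rightarrow> 'a) set"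
    and g :: "'b \<Rightarrow> ('a \<Rightarrow> 'a) pmf"
    and \<mu>1 \<mu>2 :: "'a measure"
    and a :: 'b
  assumes "lipschitz_model_class F g"
    and "prob_distr \<mu>1" and "prob_distr \<mu>2" and "\<mu>1 \<noteq> \<mu>2"
  shows "wasserstein (gen_trans g \<mu>1 a) (gen_trans g \<mu>2 a)
           \<le> ennreal (K_F F) * wasserstein \<mu>1 \<mu>2"
  \<comment> \<open>\<mu>1 \<noteq> \<mu>2 only makes the paper's quotient meaningful; the product form does not need it.\<close>
proof (cases "K_F F \<le> 0")
  case True
  then have "gen_trans g \<mu>1 a = gen_trans g \<mu>2 a"
    using assms(1-3) by (intro gen_trans_eq_if_K_F_nonpos) (auto simp: prob_distr_def)
  then show ?thesis
    using wasserstein_self[OF prob_distr_gen_trans[OF assms(1,3)]] by simp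
next
  case False
  then show ?thesis
    unfolding wasserstein_eq_INF_transport_cost[of \<mu>1 \<mu>2]
    using wasserstein_gen_trans_le_transport_cost[OF assms(1)]
    by (intro ennreal_le_mult_INF) auto
qed

end
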